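(* In a combinatorial auction with single-dimensional signals $s_i\in\{0,1,\dots,k-1\}$, where $k\ge2$ is a power of $2$, and strong-SOS valuations, the Random Bucket mechanism is universally ex-post IC-IR, and for every true profile $\mathbf{s}$ (reported truthfully) with welfare-maximizing allocation $T^*$, its expected welfare is at least $\frac{1}{2\log_2 k}\mathsf{SELF}$, where $\mathsf{SELF}=\sum_{\ell=1}^{k-1}\sum_{i:s_i=\ell}v_{iT_i^*}(\mathbf{0}_{-i},s_i)$.
   Context: Setting: $n$ agents, $m$ items; agent $i$ has private signal $s_i$; value for bundle $T$ is $v_{iT}(\mathbf{s})\ge0$, public, weakly increasing in each coordinate, strictly in $s_i$. Strong-SOS: for every $j$, $\delta\ge0$, and profiles $\mathbf{s}'\le\mathbf{s}$ coordinate-wise, $v(\mathbf{s}'_{-j},s'_j+\delta)-v(\mathbf{s}'_{-j},s'_j)\ge v(\mathbf{s}_{-j},s_j+\delta)-v(\mathbf{s}_{-j},s_j)$; every $v_{iT}$ is strong-SOS. Allocations assign disjoint bundles; utility = true value of received bundle minus payment; ex-post IC/IR, universal, as usual. Random Bucket (on reports $\mathbf{s}$): choose $\ell$ uniformly in $\{1,\dots,\log_2k\}$; $N_{B_\ell}=\{i:s_i\ge2^{\ell-1}\}$, $N_{\neg B_\ell}$ the rest; for $i\in N_{B_\ell}$, $\bar v_{iT}=v_{iT}(\mathbf{s}_{N_{\neg B_\ell}},\mathbf{2^{\ell-1}}_{N_{B_\ell}})$ (signals of all agents in $N_{B_\ell}$ replaced by $2^{\ell-1}$), else $\bar v_{iT}=0$;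 allocate $\bar T\in\arg\max\sum_{i\in N_{B_\ell}}\bar v_{i\bar T_i}$ among agents of $N_{B_\ell}$; agent receiving $\bar T_i$ pays $v_{i\bar T_i}(\mathbf{s}_{-i},2^{\ell-1}-1)$. *)

theory Defs
  imports Complex_Main
begin

text \<open>Agents are the elements of a finite type 'a, items the elements of a finite
type 'b; a bundle is a set of items. A valuation system is
v :: 'a => 'b set => ('a => nat) => real, where v i T s is agent i's value
for bundle T at signal profile s.\<close>

definition valid_profile :: "nat \<Rightarrow> ('a \<Rightarrow> nat) \<Rightarrow> bool" where
  "valid_profile k s \<longleftrightarrow> (\<forall>i. s i < k)"

definition nonneg_vals :: "nat \<Rightarrow> ('a \<Rightarrow> 'b set \<Rightarrow> ('a \<Rightarrow> nat) \<Rightarrow> real) \<Rightarrow> bool" where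
  "nonneg_vals k v \<longleftrightarrow> (\<forall>i T s. valid_profile k s \<longrightarrow> 0 \<le> v i T s)"

definition normalized_vals :: "nat \<Rightarrow> ('a \<Rightarrow> 'b set \<Rightarrow> ('a \<Rightarrow> nat) \<Rightarrow> real) \<Rightarrow> bool" where
  "normalized_vals k v \<longleftrightarrow> (\<forall>i s. valid_profile k s \<longrightarrow> v i {} s = 0)"

definition monotone_vals :: "nat \<Rightarrow> ('a \<Rightarrow> 'b set \<Rightarrow> ('a \<Rightarrow> nat) \<Rightarrow> real) \<Rightarrow> bool" where
  "monotone_vals k v \<longleftrightarrow>
     (\<forall>i T s j x. valid_profile k s \<longrightarrow> x < k \<longrightarrow> s j \<le> x \<longrightarrow> v i T s \<le> v i T (s(j := x)))"

definition strict_own_vals :: "nat \<Rightarrow> ('a \<Rightarrow> 'b set \<Rightarrow> ('a \<Rightarrow> nat) \<Rightarrow> real) \<Rightarrow> bool" where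
  "strict_own_vals k v \<longleftrightarrow>
     (\<forall>i T s x. T \<noteq> {} \<longrightarrow> valid_profile k s \<longrightarrow> x < k \<longrightarrow> s i < x \<longrightarrow> v i T s < v i T (s(i := x)))"

definition strong_SOS :: "nat \<Rightarrow> (('a \<Rightarrow> nat) \<Rightarrow> real) \<Rightarrow> bool" where
  "strong_SOS k f \<longleftrightarrow>
     (\<forall>j \<delta> s s'. valid_profile k s \<longrightarrow> valid_profile k s' \<longrightarrow> (\<forall>a. s' a \<le> s a) \<longrightarrow>
        s j + \<delta> < k \<longrightarrow>
        f (s'(j := s' j + \<delta>)) - f s' \<ge> f (s(j := s j + \<delta>)) - f s)"

definition feasible_alloc :: "('a \<Rightarrow> 'b set) \<Rightarrow> bool" where
  "feasible_alloc A \<longleftrightarrow> (\<forall>i j. i \<noteq> j \<longrightarrow> A i \<inter> A j = {})"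

definition welfare :: "('a::finite \<Rightarrow> 'b set \<Rightarrow> ('a \<Rightarrow> nat) \<Rightarrow> real) \<Rightarrow> ('a \<Rightarrow> 'b set) \<Rightarrow> ('a \<Rightarrow> nat) \<Rightarrow> real" where
  "welfare v A s = (\<Sum>i\<in>UNIV. v i (A i) s)"

definition opt_alloc :: "('a::finite \<Rightarrow> 'b set \<Rightarrow> ('a \<Rightarrow> nat) \<Rightarrow> real) \<Rightarrow> ('a \<Rightarrow> nat) \<Rightarrow> ('a \<Rightarrow> 'b set) \<Rightarrow> bool" where
  "opt_alloc v s A \<longleftrightarrow> feasible_alloc A \<and> (\<forall>A'. feasible_alloc A' \<longrightarrow> welfare v A' s \<le> welfare v A s)"

text \<open>A (deterministic) tie-breaking rule choosing, for a set B of agents and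
valuations w, an allocation among agents of B maximizing sum over B of w.\<close>
definition argmax_selector :: "('a set \<Rightarrow> ('a \<Rightarrow> 'b set \<Rightarrow> real) \<Rightarrow> ('a \<Rightarrow> 'b set)) \<Rightarrow> bool" where
  "argmax_selector sel \<longleftrightarrow>
     (\<forall>B w. feasible_alloc (sel B w) \<and> (\<forall>i. i \<notin> B \<longrightarrow> sel B w i = {}) \<and>
        (\<forall>A. feasible_alloc A \<longrightarrow> (\<forall>i. i \<notin> B \<longrightarrow> A i = {}) \<longrightarrow>
             (\<Sum>i\<in>B. w i (A i)) \<le> (\<Sum>i\<in>B. w i (sel B w i))))"

text \<open>Random Bucket, for a fixed outcome l of the random choice, on reports r.\<close>
definition rb_bucket :: "nat \<Rightarrow> ('a \<Rightarrow> nat) \<Rightarrow> 'a set" where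
  "rb_bucket l r = {i. 2 ^ (l - 1) \<le> r i}"

definition rb_vbar :: "('a \<Rightarrow> 'b set \<Rightarrow> ('a \<Rightarrow> nat) \<Rightarrow> real) \<Rightarrow> nat \<Rightarrow> ('a \<Rightarrow> nat) \<Rightarrow> 'a \<Rightarrow> 'b set \<Rightarrow> real" where
  "rb_vbar v l r i T =
     (if i \<in> rb_bucket l r
      then v i T (\<lambda>j. if j \<in> rb_bucket l r then 2 ^ (l - 1) else r j)
      else 0)"

definition rb_alloc ::
  "('a set \<Rightarrow> ('a \<Rightarrow> 'b set \<Rightarrow> real) \<Rightarrow> ('a \<Rightarrow> 'b set)) \<Rightarrow>
   ('a \<Rightarrow> 'b set \<Rightarrow> ('a \<Rightarrow> nat) \<Rightarrow> real) \<Rightarrow> nat \<Rightarrow> ('a \<Rightarrow> nat) \<Rightarrow> 'a \<Rightarrow> 'b set" where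
  "rb_alloc sel v l r = sel (rb_bucket l r) (rb_vbar v l r)"

definition rb_pay ::
  "('a set \<Rightarrow> ('a \<Rightarrow> 'b set \<Rightarrow> real) \<Rightarrow> ('a \<Rightarrow> 'b set)) \<Rightarrow>
   ('a \<Rightarrow> 'b set \<Rightarrow> ('a \<Rightarrow> nat) \<Rightarrow> real) \<Rightarrow> nat \<Rightarrow> ('a \<Rightarrow> nat) \<Rightarrow> 'a \<Rightarrow> real" where
  "rb_pay sel v l r i =
     (if i \<in> rb_bucket l r then v i (rb_alloc sel v l r i) (r(i := 2 ^ (l - 1) - 1)) else 0)"

definition rb_utility ::
  "('a set \<Rightarrow> ('a \<Rightarrow> 'b set \<Rightarrow> real) \<Rightarrow> ('a \<Rightarrow> 'b set)) \<Rightarrow>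
   ('a \<Rightarrow> 'b set \<Rightarrow> ('a \<Rightarrow> nat) \<Rightarrow> real) \<Rightarrow> nat \<Rightarrow> ('a \<Rightarrow> nat) \<Rightarrow> ('a \<Rightarrow> nat) \<Rightarrow> 'a \<Rightarrow> real" where
  "rb_utility sel v l s r i = v i (rb_alloc sel v l r i) s - rb_pay sel v l r i"

text \<open>Universal ex-post IC and IR: every deterministic mechanism in the support
(l = 1..L) is ex-post IC and IR on the signal domain {0..k-1}.\<close>
definition rb_universal_IC_IR ::
  "('a set \<Rightarrow> ('a \<Rightarrow> 'b set \<Rightarrow> real) \<Rightarrow> ('a \<Rightarrow> 'b set)) \<Rightarrow>
   ('a \<Rightarrow> 'b set \<Rightarrow> ('a \<Rightarrow> nat) \<Rightarrow> real) \<Rightarrow> nat \<Rightarrow> nat \<Rightarrow> bool" where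
  "rb_universal_IC_IR sel v k L \<longleftrightarrow>
     (\<forall>l \<in> {1..L}. \<forall>s i. valid_profile k s \<longrightarrow>
        0 \<le> rb_utility sel v l s s i \<and>
        (\<forall>x. x < k \<longrightarrow> rb_utility sel v l s (s(i := x)) i \<le> rb_utility sel v l s s i))"

definition rb_expected_welfare ::
  "('a set \<Rightarrow> ('a \<Rightarrow> 'b set \<Rightarrow> real) \<Rightarrow> ('a \<Rightarrow> 'b set)) \<Rightarrow>
   ('a::finite \<Rightarrow> 'b set \<Rightarrow> ('a \<Rightarrow> nat) \<Rightarrow> real) \<Rightarrow> nat \<Rightarrow> ('a \<Rightarrow> nat) \<Rightarrow> real" where
  "rb_expected_welfare sel v L s = (\<Sum>l = 1..L. welfare v (rb_alloc sel v l s) s) / real L"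

definition SELF :: "('a::finite \<Rightarrow> 'b set \<Rightarrow> ('a \<Rightarrow> nat) \<Rightarrow> real) \<Rightarrow> nat \<Rightarrow> ('a \<Rightarrow> nat) \<Rightarrow> ('a \<Rightarrow> 'b set) \<Rightarrow> real" where
  "SELF v k s T = (\<Sum>l = 1..k - 1. \<Sum>i \<in> {i. s i = l}. v i (T i) ((\<lambda>_. 0)(i := s i)))"

end

theory Submission imports Defs begin

text \<open>Fix a level l and put t = 2^(l-1). An agent in bucket l wins at the
threshold price v(s_{-i}, t-1), which is independent of its own report as long
as it stays in the bucket, and below its true value because values increase in
the own signal; an agent outside the bucket gets nothing and pays nothing, while
misreporting into the bucket costs at least the value gained. For welfare,
strong-SOS makes v_i(0_{-i}, \<cdot>) concave, so an agent with s_i in [t, 2t) has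
v_i(0_{-i}, s_i) \<le> 2 v_i(0_{-i}, t) \<le> 2 vbar_i. The bucket allocation maximises
the vbar-welfare, which is dominated by the true welfare; summing over the
log_2 k levels, each agent with s_i \<ge> 1 is counted exactly once.\<close>

lemma monotone_vals_le:
  fixes v :: "'a::finite \<Rightarrow> 'b set \<Rightarrow> ('a \<Rightarrow> nat) \<Rightarrow> real"
  assumes mono: "monotone_vals k v" and valid: "valid_profile k s"
    and le: "\<And>j. s' j \<le> s j"
  shows "v i T s' \<le> v i T s"
proof -
  have induct: "v i T s' \<le> v i T s" if "finite D" "\<And>j. j \<notin> D \<Longrightarrow> s' j = s j" "\<And>j. s' j \<le> s j"
    for D and s' :: "'a \<Rightarrow> nat"
    using that
  proof (induction D arbitrary: s' rule: finite_induct)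
    case empty
    then have "s' = s" by auto
    then show ?case by simp
  next
    case (insert a D)
    have "valid_profile k s'"
      using insert.prems(2) valid le_less_trans unfolding valid_profile_def by blast
    then have "v i T s' \<le> v i T (s'(a := s a))"
      using mono insert.prems(2) valid unfolding monotone_vals_def valid_profile_def by blast
    also have "\<dots> \<le> v i T s"
      using insert.prems by (intro insert.IH) auto
    finally show ?case .
  qed
  show ?thesis
    using le by (intro induct[of UNIV]) auto
qed

lemma strong_SOS_own_signal_doubling:
  assumes nonneg: "nonneg_vals k v" and mono: "monotone_vals k v"
    and sos: "strong_SOS k (v i T)"
    and x: "t \<le> x" "x < 2 * t" "x < k"
  shows "v i T ((\<lambda>_. 0)(i := x)) \<le> 2 * v i T ((\<lambda>_. 0)(i := t))"
proof -
  define f where "f y = v i T ((\<lambda>_. 0)(i := y))" for y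
  define d where "d = x - t"
  have x_eq: "x = t + d" and d_le: "d \<le> t"
    using x unfolding d_def by auto
  have valid: "valid_profile k ((\<lambda>_. 0)(i := y))" if "y < k" for y
    using that x unfolding valid_profile_def by auto
  have zero: "(\<lambda>_. 0::nat)(i := 0) = (\<lambda>_. 0)"
    by auto
  \<comment> \<open>strong-SOS with base profiles t and 0: the increment by d shrinks as t grows\<close>
  have "f (t + d) - f t \<le> f d - f 0"
    using sos[unfolded strong_SOS_def, rule_format, of "(\<lambda>_. 0)(i := t)" "(\<lambda>_. 0)" i d]
      valid[of t] valid[of 0] x x_eq zero
    unfolding f_def valid_profile_def by auto
  moreover have "0 \<le> f 0"
    using nonneg valid[of 0] x unfolding f_def nonneg_vals_def by auto
  moreover have "f d \<le> f t"
    using mono[unfolded monotone_vals_def, rule_format, of "(\<lambda>_. 0)(i := d)" t i] valid[of d] x d_le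
    unfolding f_def by auto
  ultimately show ?thesis
    using x_eq unfolding f_def by simp
qed

lemma dyadic_level_exists:
  fixes x :: nat
  assumes "1 \<le> x" "x < 2 ^ L"
  shows "\<exists>l\<in>{1..L}. 2 ^ (l - 1) \<le> x \<and> x < 2 ^ l"
  using assms
proof (induction L)
  case (Suc L)
  show ?case
  proof (cases "x < 2 ^ L")
    case True
    with Suc show ?thesis by force
  next
    case False
    with Suc.prems show ?thesis by (intro bexI[of _ "Suc L"]) auto
  qed
qed simp

lemma dyadic_level_unique:
  fixes x :: nat
  assumes "1 \<le> l" "2 ^ (l - 1) \<le> x" "x < 2 ^ l"
    and "1 \<le> l'" "2 ^ (l' - 1) \<le> x" "x < 2 ^ l'"
  shows "l = l'"
proof (rule ccontr)
  have no_gap: "\<not> (m < m' \<and> 2 ^ (m' - 1) \<le> x \<and> x < (2::nat) ^ m)" for m m'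
  proof
    assume *: "m < m' \<and> 2 ^ (m' - 1) \<le> x \<and> x < (2::nat) ^ m"
    then have "(2::nat) ^ m \<le> 2 ^ (m' - 1)"
      by (intro power_increasing) auto
    with * show False by linarith
  qed
  assume "l \<noteq> l'"
  then show False
    using no_gap[of l l'] no_gap[of l' l] assms by linarith
qed

lemma sum_dyadic_levels:
  fixes x :: nat and c :: real
  assumes "x < 2 ^ L"
  shows "(\<Sum>l = 1..L. if 2 ^ (l - 1) \<le> x \<and> x < 2 ^ l then c else 0) = (if 1 \<le> x then c else 0)"
proof (cases "1 \<le> x")
  case True
  then obtain l0 where l0: "l0 \<in> {1..L}" "2 ^ (l0 - 1) \<le> x" "x < 2 ^ l0"
    using dyadic_level_exists assms by blast
  have "(\<Sum>l = 1..L. if 2 ^ (l - 1) \<le> x \<and> x < 2 ^ l then c else 0)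
      = (\<Sum>l = 1..L. if l = l0 then c else 0)"
    using l0 dyadic_level_unique[of l0] by (intro sum.cong) auto
  with l0 True show ?thesis
    by simp
next
  case False
  then have "x = 0" by simp
  then show ?thesis by simp
qed

lemma SELF_by_dyadic_levels:
  assumes k: "k = 2 ^ L" and valid: "valid_profile k s"
  shows "SELF v k s T
    = (\<Sum>l = 1..L. \<Sum>i | 2 ^ (l - 1) \<le> s i \<and> s i < 2 ^ l. v i (T i) ((\<lambda>_. 0)(i := s i)))"
proof -
  define g where "g i = v i (T i) ((\<lambda>_. 0)(i := s i))" for i
  have filter: "sum f {x. P x} = (\<Sum>x\<in>UNIV. if P x then f x else 0)" for f :: "'a \<Rightarrow> real" and P
    using sum.inter_filter[of UNIV f P] by simp
  have s_lt: "s i < k" for i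
    using valid unfolding valid_profile_def by simp
  have "SELF v k s T = (\<Sum>i\<in>UNIV. \<Sum>l = 1..k - 1. if s i = l then g i else 0)"
    unfolding SELF_def g_def filter by (rule sum.swap)
  also have "\<dots> = (\<Sum>i\<in>UNIV. if 1 \<le> s i then g i else 0)"
  proof (intro sum.cong refl)
    fix i
    show "(\<Sum>l = 1..k - 1. if s i = l then g i else 0) = (if 1 \<le> s i then g i else 0)"
      using s_lt[of i] by (simp add: sum.delta) linarith
  qed
  also have "\<dots> = (\<Sum>i\<in>UNIV. \<Sum>l = 1..L. if 2 ^ (l - 1) \<le> s i \<and> s i < 2 ^ l then g i else 0)"
    using s_lt k by (intro sum.cong refl sum_dyadic_levels[symmetric]) auto
  also have "\<dots> = (\<Sum>l = 1..L. \<Sum>i | 2 ^ (l - 1) \<le> s i \<and> s i < 2 ^ l. g i)"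
    unfolding filter by (rule sum.swap)
  finally show ?thesis
    unfolding g_def .
qed

lemma rb_alloc_pay_own_report_in_bucket:
  assumes "i \<in> rb_bucket l r" "i \<in> rb_bucket l r'" "\<And>j. j \<noteq> i \<Longrightarrow> r j = r' j"
  shows "rb_alloc sel v l r = rb_alloc sel v l r'" "rb_pay sel v l r i = rb_pay sel v l r' i"
proof -
  have "2 ^ (l - 1) \<le> r j \<longleftrightarrow> 2 ^ (l - 1) \<le> r' j" for j
    using assms unfolding rb_bucket_def by (cases "j = i") auto
  then have bucket: "rb_bucket l r = rb_bucket l r'"
    unfolding rb_bucket_def by simp
  have "(\<lambda>j. if j \<in> rb_bucket l r then 2 ^ (l - 1) else r j)
      = (\<lambda>j. if j \<in> rb_bucket l r' then 2 ^ (l - 1) else r' j)"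
    using assms(2,3) unfolding bucket by (intro ext) metis
  then have "rb_vbar v l r = rb_vbar v l r'"
    by (intro ext) (simp add: rb_vbar_def bucket)
  then show alloc: "rb_alloc sel v l r = rb_alloc sel v l r'"
    unfolding rb_alloc_def bucket by simp
  have "r(i := 2 ^ (l - 1) - 1) = r'(i := 2 ^ (l - 1) - 1)"
    using assms(3) by auto
  then show "rb_pay sel v l r i = rb_pay sel v l r' i"
    unfolding rb_pay_def alloc bucket by simp
qed

lemma rb_utility_outside_bucket:
  assumes sel: "argmax_selector sel" and norm: "normalized_vals k v" and valid: "valid_profile k s"
    and out: "i \<notin> rb_bucket l r"
  shows "rb_utility sel v l s r i = 0"
proof -
  have "rb_alloc sel v l r i = {}"
    using sel out unfolding rb_alloc_def argmax_selector_def by blast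
  then show ?thesis
    using out norm valid unfolding rb_utility_def rb_pay_def normalized_vals_def by simp
qed

lemma rb_level_IC_IR:
  fixes v :: "'a::finite \<Rightarrow> 'b set \<Rightarrow> ('a \<Rightarrow> nat) \<Rightarrow> real"
  assumes mono: "monotone_vals k v" and norm: "normalized_vals k v" and sel: "argmax_selector sel"
    and t_pos: "1 \<le> (2::nat) ^ (l - 1)" and t_lt: "(2::nat) ^ (l - 1) < k"
    and valid: "valid_profile k s"
  shows "0 \<le> rb_utility sel v l s s i"
    and "x < k \<Longrightarrow> rb_utility sel v l s (s(i := x)) i \<le> rb_utility sel v l s s i"
proof -
  define t where "t = (2::nat) ^ (l - 1)"
  have price_le_value: "v i U (s(i := t - 1)) \<le> v i U s" if "t - 1 \<le> s i" for U
    using monotone_vals_le[OF mono valid] that by simp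
  have price_ge_value: "v i U s \<le> v i U (s(i := t - 1))" if "s i \<le> t - 1" for U
    using mono valid t_lt that unfolding monotone_vals_def t_def by simp
  show truthful: "0 \<le> rb_utility sel v l s s i"
  proof (cases "i \<in> rb_bucket l s")
    case True
    then have "t - 1 \<le> s i"
      unfolding rb_bucket_def t_def by simp
    with True show ?thesis
      using price_le_value unfolding rb_utility_def rb_pay_def t_def by simp
  qed (simp add: rb_utility_outside_bucket[OF sel norm valid])
  assume "x < k"
  show "rb_utility sel v l s (s(i := x)) i \<le> rb_utility sel v l s s i"
  proof (cases "i \<in> rb_bucket l (s(i := x))")
    case in_x: True
    show ?thesis
    proof (cases "i \<in> rb_bucket l s")
      case True
      show ?thesis
        using rb_alloc_pay_own_report_in_bucket[OF in_x True, of sel v] unfolding rb_utility_def by simp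
    next
      case False
      then have "s i \<le> t - 1"
        unfolding rb_bucket_def t_def by simp
      then have "rb_utility sel v l s (s(i := x)) i \<le> 0"
        using in_x price_ge_value unfolding rb_utility_def rb_pay_def t_def by simp
      with truthful show ?thesis by simp
    qed
  qed (use truthful rb_utility_outside_bucket[OF sel norm valid] in simp)
qed

lemma rb_universal_IC_IR:
  fixes v :: "'a::finite \<Rightarrow> 'b set \<Rightarrow> ('a \<Rightarrow> nat) \<Rightarrow> real"
  assumes k: "k = 2 ^ L"
    and mono: "monotone_vals k v" and norm: "normalized_vals k v" and sel: "argmax_selector sel"
  shows "rb_universal_IC_IR sel v k L"
proof -
  have "(2::nat) ^ (l - 1) < k" if "l \<in> {1..L}" for l
    using that k by (auto intro: power_strict_increasing)
  then show ?thesis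
    unfolding rb_universal_IC_IR_def using rb_level_IC_IR[OF mono norm sel] by simp
qed

lemma rb_level_welfare:
  assumes nonneg: "nonneg_vals k v" and norm: "normalized_vals k v" and mono: "monotone_vals k v"
    and sos: "\<forall>i T. strong_SOS k (v i T)" and sel: "argmax_selector sel"
    and l: "1 \<le> l" and t_lt: "(2::nat) ^ (l - 1) < k" and valid: "valid_profile k s"
    and feasible: "feasible_alloc T"
  shows "(\<Sum>i | 2 ^ (l - 1) \<le> s i \<and> s i < 2 ^ l. v i (T i) ((\<lambda>_. 0)(i := s i)))
           \<le> 2 * welfare v (rb_alloc sel v l s) s"
proof -
  define t where "t = (2::nat) ^ (l - 1)"
  define B where "B = rb_bucket l s"
  define P where "P = {i. t \<le> s i \<and> s i < 2 * t}"
  define capped where "capped = (\<lambda>j. if j \<in> B then t else s j)"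
  define A where "A = rb_alloc sel v l s"
  define T_P where "T_P = (\<lambda>i. if i \<in> P then T i else {})"
  have two_t: "(2::nat) ^ l = 2 * t"
    using l unfolding t_def by (cases l) auto
  have P_B: "P \<subseteq> B"
    unfolding P_def B_def rb_bucket_def t_def by auto
  have valid_capped: "valid_profile k capped"
    using valid t_lt unfolding capped_def valid_profile_def t_def by auto
  have capped_le: "capped j \<le> s j" for j
    unfolding capped_def B_def rb_bucket_def t_def by auto
  have vbar: "rb_vbar v l s i U = v i U capped" if "i \<in> B" for i U
    using that unfolding rb_vbar_def capped_def B_def t_def by simp
  have self_term: "v i (T i) ((\<lambda>_. 0)(i := s i)) \<le> 2 * v i (T i) capped" if "i \<in> P" for i
  proof -
    have "v i (T i) ((\<lambda>_. 0)(i := s i)) \<le> 2 * v i (T i) ((\<lambda>_. 0)(i := t))"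
      using strong_SOS_own_signal_doubling[OF nonneg mono sos[rule_format]] that valid
      unfolding P_def valid_profile_def fun_upd_def by auto
    also have "\<dots> \<le> 2 * v i (T i) capped"
      using monotone_vals_le[OF mono valid_capped, of "(\<lambda>_. 0)(i := t)"] that P_B
      unfolding capped_def by auto
    finally show ?thesis .
  qed
  have "(\<Sum>i\<in>P. v i (T i) ((\<lambda>_. 0)(i := s i))) \<le> 2 * (\<Sum>i\<in>P. v i (T i) capped)"
    using self_term by (simp add: sum_distrib_left sum_mono)
  also have "(\<Sum>i\<in>P. v i (T i) capped) = (\<Sum>i\<in>B. rb_vbar v l s i (T_P i))"
  proof -
    have "(\<Sum>i\<in>B. rb_vbar v l s i (T_P i)) = (\<Sum>i\<in>B. if i \<in> P then v i (T i) capped else 0)"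
      using vbar norm valid_capped unfolding T_P_def normalized_vals_def by (intro sum.cong) auto
    also have "\<dots> = (\<Sum>i\<in>P. v i (T i) capped)"
      using P_B by (simp add: sum.If_cases Int_absorb1)
    finally show ?thesis by simp
  qed
  also have "(\<Sum>i\<in>B. rb_vbar v l s i (T_P i)) \<le> (\<Sum>i\<in>B. rb_vbar v l s i (A i))"
  proof -
    have "feasible_alloc T_P" "\<forall>i. i \<notin> B \<longrightarrow> T_P i = {}"
      using feasible P_B unfolding feasible_alloc_def T_P_def by auto
    then show ?thesis
      using sel unfolding argmax_selector_def A_def rb_alloc_def B_def by blast
  qed
  also have "(\<Sum>i\<in>B. rb_vbar v l s i (A i)) \<le> (\<Sum>i\<in>B. v i (A i) s)"
    using vbar monotone_vals_le[OF mono valid capped_le] by (simp add: sum_mono)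
  also have "\<dots> \<le> welfare v A s"
    using nonneg valid unfolding welfare_def nonneg_vals_def by (intro sum_mono2) auto
  finally show ?thesis
    unfolding A_def P_def two_t t_def by (simp add: fun_upd_def)
qed

lemma rb_expected_welfare_ge_SELF:
  assumes k: "k = 2 ^ L" and k_ge: "k \<ge> 2"
    and nonneg: "nonneg_vals k v" and norm: "normalized_vals k v" and mono: "monotone_vals k v"
    and sos: "\<forall>i T. strong_SOS k (v i T)" and sel: "argmax_selector sel"
    and valid: "valid_profile k s" and feasible: "feasible_alloc T"
  shows "SELF v k s T / (2 * log 2 (real k)) \<le> rb_expected_welfare sel v L s"
proof -
  have L_pos: "0 < L"
    using k k_ge by (cases L) auto
  have t_lt: "(2::nat) ^ (l - 1) < k" if "l \<in> {1..L}" for l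
    using that k by (auto intro: power_strict_increasing)
  have "SELF v k s T \<le> (\<Sum>l = 1..L. 2 * welfare v (rb_alloc sel v l s) s)"
    unfolding SELF_by_dyadic_levels[OF k valid]
    using rb_level_welfare[OF nonneg norm mono sos sel _ t_lt valid feasible] by (intro sum_mono) auto
  then have "SELF v k s T \<le> 2 * (\<Sum>l = 1..L. welfare v (rb_alloc sel v l s) s)"
    by (simp add: sum_distrib_left)
  moreover have "log 2 (real k) = real L"
    using k by (simp add: log_nat_power)
  ultimately show ?thesis
    using L_pos unfolding rb_expected_welfare_def by (simp add: divide_right_mono field_simps)
qed

theorem mainTheorem9:
  fixes v :: "'a::finite \<Rightarrow> 'b::finite set \<Rightarrow> ('a \<Rightarrow> nat) \<Rightarrow> real"
    and sel :: "'a set \<Rightarrow> ('a \<Rightarrow> 'b set \<Rightarrow> real) \<Rightarrow> ('a \<Rightarrow> 'b set)"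
    and k L :: nat
  assumes k_pow: "k = 2 ^ L" and k_ge: "k \<ge> 2"
    and nonneg: "nonneg_vals k v"
    and norm: "normalized_vals k v"
    and mono: "monotone_vals k v"
    and strict: "strict_own_vals k v"
    and sos: "\<forall>i T. strong_SOS k (v i T)"
    and sel: "argmax_selector sel"
  shows "rb_universal_IC_IR sel v k L \<and>
         (\<forall>s T. valid_profile k s \<longrightarrow> opt_alloc v s T \<longrightarrow>
            rb_expected_welfare sel v L s \<ge> SELF v k s T / (2 * log 2 (real k)))"
  using rb_universal_IC_IR[OF k_pow mono norm sel]
    rb_expected_welfare_ge_SELF[OF k_pow k_ge nonneg norm mono sos sel]
  unfolding opt_alloc_def by blast

end
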